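(* Let $m$ be a square-free integer and let $B$ be a commutative algebra over $A=\mathbb{Z}/m\mathbb{Z}$ that is free of finite rank as an $A$-module. If $p>\operatorname{rk}_A(B)$ for all primes $p$ dividing $m$, then $\operatorname{Trad}(B/A)=\operatorname{nil}(B)$.
   Context: For commutative rings $A\subseteq B$ with $B$ free of finite rank over $A$, $\operatorname{Tr}_{B/A}:B\to A$ sends $x$ to the trace of the $A$-linear map $y\mapsto xy$ on $B$, and the trace radical is $\operatorname{Trad}(B/A)=\{x\in B: \operatorname{Tr}_{B/A}(xB)=0\}$. $\operatorname{nil}(B)$ is the ideal of nilpotent elements of $B$. *)

theory Defs
  imports "HOL-Computational_Algebra.Computational_Algebra"
begin

text \<open>A commutative ring B (a type of class comm_ring_1) with m * 1 = 0 is the same thing as a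
commutative Z/mZ-algebra. Scalars of Z/mZ are represented by integers, a scalar being zero
iff m divides it. The scalar c acts on B as multiplication by of_int c.\<close>

definition is_zmod_basis :: "int \<Rightarrow> nat \<Rightarrow> (nat \<Rightarrow> 'b::comm_ring_1) \<Rightarrow> bool" where
  "is_zmod_basis m n b \<longleftrightarrow>
     (\<forall>x. \<exists>c. x = (\<Sum>k<n. of_int (c k) * b k)) \<and>
     (\<forall>c. (\<Sum>k<n. of_int (c k) * b k) = 0 \<longrightarrow> (\<forall>k<n. m dvd c k))"

text \<open>Trace of multiplication by x with respect to the basis b (value in Z, read modulo m):
the sum of the diagonal entries of the matrix of y \<mapsto> x*y.\<close>
definition zmod_trace :: "nat \<Rightarrow> (nat \<Rightarrow> 'b::comm_ring_1) \<Rightarrow> 'b \<Rightarrow> int" where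
  "zmod_trace n b x =
     (\<Sum>j<n. (SOME c. x * b j = (\<Sum>k<n. of_int (c k) * b k)) j)"

definition trace_radical :: "int \<Rightarrow> nat \<Rightarrow> (nat \<Rightarrow> 'b::comm_ring_1) \<Rightarrow> 'b set" where
  "trace_radical m n b = {x. \<forall>y. m dvd zmod_trace n b (x * y)}"

definition nilradical :: "'b::comm_ring_1 set" where
  "nilradical = {x. \<exists>k::nat. x ^ k = 0}"

end

theory Submission
  imports Defs "HOL-Number_Theory.Cong"
begin

text \<open>
  Fix a prime \<open>p\<close> dividing \<open>m\<close>. Modulo \<open>p\<close>, \<open>B\<close> becomes the \<open>n\<close>-dimensional
  \<open>\<bbbF>\<^sub>p\<close>-vector space \<open>B/pB\<close>, and \<open>Tr(z) mod p\<close> is the trace of multiplication by \<open>z\<close>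
  on it, computed in any basis. A nilpotent \<open>z\<close> has a basis adapted to the flag of the kernels
  of \<open>z\<^sup>t\<close>, in which its matrix is strictly triangular; so \<open>Tr(z) \<equiv> 0 mod p\<close>, and since
  \<open>m\<close> is squarefree, \<open>nil(B) \<subseteq> Trad(B/A)\<close>.
  Conversely, \<open>B\<close> is finite, so some power \<open>e = x\<^sup>K\<close> of any \<open>x\<close> is idempotent. Splitting
  \<open>B/pB\<close> along \<open>e\<close> shows that \<open>Tr(e) mod p\<close> is the dimension of \<open>e(B/pB)\<close>, a number at
  most \<open>n < p\<close>. For \<open>x \<in> Trad(B/A)\<close> this forces \<open>e \<in> pB\<close> for every \<open>p\<close> dividing \<open>m\<close>,
  hence \<open>e = 0\<close> and \<open>x\<close> is nilpotent.
\<close>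

lemma squarefree_dvd_if_prime_divisors_dvd:
  fixes m t :: int
  assumes "squarefree m" "\<And>p. prime p \<Longrightarrow> p dvd m \<Longrightarrow> p dvd t"
  shows "m dvd t"
proof (cases "t = 0")
  case False
  have "m \<noteq> 0"
    using assms(1) by auto
  then show ?thesis
  proof (rule multiplicity_le_imp_dvd)
    fix p :: int assume p: "prime p"
    show "multiplicity p m \<le> multiplicity p t"
    proof (cases "p dvd m")
      case True
      have "multiplicity p m \<le> 1"
        using assms(1) \<open>m \<noteq> 0\<close> p squarefree_factorial_semiring'' by blast
      moreover have "1 \<le> multiplicity p t"
        using assms(2)[OF p True] False prime_multiplicity_gt_zero_iff[OF prime_imp_prime_elem[OF p], of t]
        by simp
      ultimately show ?thesis
        by linarith
    qed (simp add: not_dvd_imp_multiplicity_0)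
  qed
qed simp

lemma finite_idempotent_power:
  fixes x :: "'a::monoid_mult"
  assumes "finite (UNIV :: 'a set)"
  obtains K where "K \<ge> 1" "x ^ K * x ^ K = x ^ K"
proof -
  have "\<not> inj (\<lambda>k::nat. x ^ k)"
  proof
    assume "inj (\<lambda>k::nat. x ^ k)"
    moreover have "finite (range (\<lambda>k::nat. x ^ k))"
      by (rule finite_subset[OF _ assms]) simp
    ultimately have "finite (UNIV :: nat set)"
      by (blast intro: finite_imageD)
    then show False
      by simp
  qed
  then obtain i j where "x ^ i = x ^ j" "i \<noteq> j"
    by (auto simp: inj_def)
  then have "min i j < max i j" "x ^ min i j = x ^ max i j"
    by (auto simp: min_def max_def)
  then obtain i d where "d > 0" and period: "x ^ (i + d) = x ^ i"
    by (metis less_imp_add_positive)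
  have shift: "x ^ (k + d) = x ^ k" if "i \<le> k" for k
  proof -
    have "x ^ (k + d) = x ^ (k - i) * x ^ (i + d)"
      using that by (simp flip: power_add)
    also have "\<dots> = x ^ k"
      using that by (simp add: period flip: power_add)
    finally show ?thesis .
  qed
  have periodic: "x ^ (k + d * t) = x ^ k" if "i \<le> k" for k t
  proof (induction t)
    case (Suc t)
    have "x ^ (k + d * Suc t) = x ^ (k + d * t + d)"
      by (simp add: algebra_simps)
    also have "\<dots> = x ^ k"
      using shift[of "k + d * t"] that Suc.IH by simp
    finally show ?case .
  qed simp
  define K where "K = d * Suc i"
  have "1 * Suc i \<le> d * Suc i"
    using \<open>d > 0\<close> by (intro mult_le_mono1) simp
  then have "K \<ge> Suc i"
    by (simp add: K_def)
  have "x ^ K * x ^ K = x ^ (K + d * Suc i)"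
    by (simp add: K_def power_add)
  also have "\<dots> = x ^ K"
    using periodic[of K "Suc i"] \<open>K \<ge> Suc i\<close> by simp
  finally show ?thesis
    using \<open>K \<ge> Suc i\<close> by (intro that[of K]) auto
qed

definition lincomb :: "(nat \<Rightarrow> int) \<Rightarrow> (nat \<Rightarrow> 'b::comm_ring_1) \<Rightarrow> nat \<Rightarrow> 'b" where
  "lincomb c w N = (\<Sum>i<N. of_int (c i) * w i)"

lemma lincomb_0_terms [simp]: "lincomb c w 0 = 0"
  by (simp add: lincomb_def)

lemma lincomb_0_coeffs [simp]: "lincomb (\<lambda>_. 0) w N = 0"
  by (simp add: lincomb_def)

lemma lincomb_cong: "(\<And>i. i < N \<Longrightarrow> c i = d i) \<Longrightarrow> (\<And>i. i < N \<Longrightarrow> w i = v i) \<Longrightarrow>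
    lincomb c w N = lincomb d v N"
  unfolding lincomb_def by (intro sum.cong) auto

lemma lincomb_diff: "lincomb c w N - lincomb d w N = lincomb (\<lambda>i. c i - d i) w N"
  by (simp add: lincomb_def sum_subtractf left_diff_distrib)

lemma lincomb_add: "lincomb c w N + lincomb d w N = lincomb (\<lambda>i. c i + d i) w N"
  by (simp add: lincomb_def sum.distrib distrib_right)

lemma mult_lincomb: "z * lincomb c w N = lincomb c (\<lambda>i. z * w i) N"
  by (simp add: lincomb_def sum_distrib_left mult.left_commute)

lemma of_int_mult_lincomb: "of_int a * lincomb c w N = lincomb (\<lambda>i. a * c i) w N"
  by (simp add: lincomb_def sum_distrib_left mult.assoc)

lemma lincomb_fun_upd_Suc: "lincomb c (w(N := y)) (Suc N) = lincomb c w N + of_int (c N) * y"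
proof -
  have "lincomb c (w(N := y)) N = lincomb c w N"
    by (rule lincomb_cong) auto
  then show ?thesis
    by (simp add: lincomb_def)
qed

lemma lincomb_truncate:
  assumes "i \<le> N"
  shows "lincomb (\<lambda>l. if l < i then c l else 0) w N = lincomb c w i"
proof -
  have "lincomb (\<lambda>l. if l < i then c l else 0) w N = lincomb (\<lambda>l. if l < i then c l else 0) w i"
    unfolding lincomb_def using assms by (intro sum.mono_neutral_right) auto
  also have "\<dots> = lincomb c w i"
    by (rule lincomb_cong) auto
  finally show ?thesis .
qed

lemma lincomb_delta:
  assumes "i < N"
  shows "lincomb (\<lambda>l. if l = i then 1 else 0) w N = w i"
proof -
  have "lincomb (\<lambda>l. if l = i then 1 else 0) w N = (\<Sum>l<N. if l = i then w l else 0)"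
    unfolding lincomb_def by (intro sum.cong) auto
  then show ?thesis using assms by simp
qed

lemma lincomb_lincomb:
  "lincomb c (\<lambda>j. lincomb (\<lambda>i. A i j) w N) M = lincomb (\<lambda>i. \<Sum>j<M. A i j * c j) w N"
proof -
  have "lincomb c (\<lambda>j. lincomb (\<lambda>i. A i j) w N) M = (\<Sum>j<M. \<Sum>i<N. of_int (A i j * c j) * w i)"
    unfolding lincomb_def by (simp add: sum_distrib_left mult_ac)
  also have "\<dots> = (\<Sum>i<N. \<Sum>j<M. of_int (A i j * c j) * w i)"
    by (rule sum.swap)
  finally show ?thesis
    unfolding lincomb_def by (simp add: sum_distrib_right)
qed

section \<open>Linear algebra modulo a prime\<close>

text \<open>
  Elements of \<open>B\<close> are compared modulo \<open>pB\<close> and integer coefficients modulo \<open>p\<close>: this is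
  linear algebra over \<open>\<bbbF>\<^sub>p\<close> in \<open>B/pB\<close>, carried out without forming the quotient.
\<close>

definition ring_cong :: "int \<Rightarrow> 'b::comm_ring_1 \<Rightarrow> 'b \<Rightarrow> bool" where
  "ring_cong p x y \<longleftrightarrow> of_int p dvd x - y"

lemma ring_cong_refl [simp]: "ring_cong p x x"
  by (simp add: ring_cong_def)

lemma ring_cong_sym: "ring_cong p x y \<Longrightarrow> ring_cong p y x"
  unfolding ring_cong_def by (metis dvd_minus_iff minus_diff_eq)

lemma ring_cong_trans [trans]: "ring_cong p x y \<Longrightarrow> ring_cong p y z \<Longrightarrow> ring_cong p x z"
  unfolding ring_cong_def by (metis diff_add_cancel add_diff_eq dvd_add)

lemma ring_cong_add: "ring_cong p x y \<Longrightarrow> ring_cong p x' y' \<Longrightarrow> ring_cong p (x + x') (y + y')"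
  unfolding ring_cong_def by (metis add_diff_add dvd_add)

lemma ring_cong_mult_left: "ring_cong p x y \<Longrightarrow> ring_cong p (z * x) (z * y)"
  unfolding ring_cong_def by (metis dvd_mult right_diff_distrib)

lemma ring_cong_0_iff [simp]: "ring_cong p x 0 \<longleftrightarrow> of_int p dvd x"
  by (simp add: ring_cong_def)

lemma ring_cong_of_int_mult_cong: "[a = a'] (mod p) \<Longrightarrow> ring_cong p (of_int a * y) (of_int a' * y)"
  unfolding ring_cong_def cong_iff_dvd_diff
  by (metis dvd_def dvd_mult2 left_diff_distrib of_int_diff of_int_mult)

lemma ring_cong_sum: "(\<And>i. i \<in> I \<Longrightarrow> ring_cong p (f i) (g i)) \<Longrightarrow> ring_cong p (sum f I) (sum g I)"
  unfolding ring_cong_def sum_subtractf[symmetric] by (rule dvd_sum)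

lemma ring_cong_lincomb_coeffs:
  "(\<And>i. i < N \<Longrightarrow> [c i = d i] (mod p)) \<Longrightarrow> ring_cong p (lincomb c w N) (lincomb d w N)"
  unfolding lincomb_def by (intro ring_cong_sum ring_cong_of_int_mult_cong) simp

lemma ring_cong_lincomb_vectors:
  "(\<And>j. j < M \<Longrightarrow> ring_cong p (u j) (v j)) \<Longrightarrow> ring_cong p (lincomb c u M) (lincomb c v M)"
  unfolding lincomb_def by (intro ring_cong_sum ring_cong_mult_left) simp

definition independent_mod :: "int \<Rightarrow> (nat \<Rightarrow> 'b::comm_ring_1) \<Rightarrow> nat \<Rightarrow> bool" where
  "independent_mod p w N \<longleftrightarrow> (\<forall>c. ring_cong p (lincomb c w N) 0 \<longrightarrow> (\<forall>i<N. p dvd c i))"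

definition in_span_mod :: "int \<Rightarrow> (nat \<Rightarrow> 'b::comm_ring_1) \<Rightarrow> nat \<Rightarrow> 'b \<Rightarrow> bool" where
  "in_span_mod p w N y \<longleftrightarrow> (\<exists>c. ring_cong p y (lincomb c w N))"

definition basis_mod :: "int \<Rightarrow> (nat \<Rightarrow> 'b::comm_ring_1) \<Rightarrow> nat \<Rightarrow> bool" where
  "basis_mod p w N \<longleftrightarrow> independent_mod p w N \<and> (\<forall>y. in_span_mod p w N y)"

definition is_matrix_mod ::
    "int \<Rightarrow> 'b::comm_ring_1 \<Rightarrow> (nat \<Rightarrow> 'b) \<Rightarrow> nat \<Rightarrow> (nat \<Rightarrow> nat \<Rightarrow> int) \<Rightarrow> bool" where
  "is_matrix_mod p z w N A \<longleftrightarrow> (\<forall>i<N. ring_cong p (z * w i) (lincomb (\<lambda>l. A l i) w N))"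

lemma independent_mod_0 [simp]: "independent_mod p w 0"
  by (simp add: independent_mod_def)

lemma independent_mod_coeffs_cong:
  assumes "independent_mod p w N" "ring_cong p (lincomb c w N) (lincomb d w N)" "i < N"
  shows "[c i = d i] (mod p)"
proof -
  have "ring_cong p (lincomb (\<lambda>i. c i - d i) w N) 0"
    using assms(2) by (simp add: ring_cong_def lincomb_diff)
  then have "p dvd c i - d i"
    using assms(1,3) unfolding independent_mod_def by blast
  then show ?thesis
    by (simp add: cong_iff_dvd_diff)
qed

lemma in_span_mod_mono:
  assumes "in_span_mod p w i y" "i \<le> N" "\<And>l. l < i \<Longrightarrow> w' l = w l"
  shows "in_span_mod p w' N y"
proof -
  obtain c where "ring_cong p y (lincomb c w i)"
    using assms(1) unfolding in_span_mod_def by blast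
  also have "lincomb c w i = lincomb c w' i"
    using assms(3) by (intro lincomb_cong) auto
  also have "\<dots> = lincomb (\<lambda>l. if l < i then c l else 0) w' N"
    using assms(2) by (rule lincomb_truncate[symmetric])
  finally show ?thesis
    unfolding in_span_mod_def by blast
qed

lemma basis_mod_coords:
  assumes "basis_mod p w N"
  obtains coords where "\<And>y. ring_cong p y (lincomb (coords y) w N)"
proof -
  have "\<forall>y. \<exists>c. ring_cong p y (lincomb c w N)"
    using assms unfolding basis_mod_def in_span_mod_def by blast
  then show ?thesis
    using that by metis
qed

lemma in_span_mod_add:
  "in_span_mod p w N x \<Longrightarrow> in_span_mod p w N y \<Longrightarrow> in_span_mod p w N (x + y)"
  unfolding in_span_mod_def by (metis lincomb_add ring_cong_add)

lemma ring_cong_lincomb_lincomb: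
  assumes "\<And>j. j < M \<Longrightarrow> ring_cong p (u j) (lincomb (\<lambda>i. A i j) w N)"
  shows "ring_cong p (lincomb c u M) (lincomb (\<lambda>i. \<Sum>j<M. A i j * c j) w N)"
proof -
  have "ring_cong p (lincomb c u M) (lincomb c (\<lambda>j. lincomb (\<lambda>i. A i j) w N) M)"
    using assms by (rule ring_cong_lincomb_vectors)
  then show ?thesis
    by (simp only: lincomb_lincomb)
qed

lemma is_matrix_mod_lincomb:
  assumes "is_matrix_mod p z w N A"
  shows "ring_cong p (z * lincomb c w N) (lincomb (\<lambda>l. \<Sum>i<N. A l i * c i) w N)"
  unfolding mult_lincomb
  using assms unfolding is_matrix_mod_def by (intro ring_cong_lincomb_lincomb) auto

lemma trace_mod_basis_change:
  assumes v: "basis_mod p v M" and w: "basis_mod p w N"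
    and A: "is_matrix_mod p z v M A" and C: "is_matrix_mod p z w N C"
  shows "[(\<Sum>j<M. A j j) = (\<Sum>i<N. C i i)] (mod p)"
proof -
  txt \<open>With change-of-basis matrices \<open>P\<close> and \<open>Q\<close>: \<open>A \<equiv> Q C P\<close> and \<open>P Q \<equiv> 1\<close>, so
    \<open>tr A \<equiv> tr (C P Q) \<equiv> tr C\<close>.\<close>
  obtain coords_w where coords_w: "\<And>y. ring_cong p y (lincomb (coords_w y) w N)"
    using basis_mod_coords[OF w] by blast
  obtain coords_v where coords_v: "\<And>y. ring_cong p y (lincomb (coords_v y) v M)"
    using basis_mod_coords[OF v] by blast
  define P where "P j = coords_w (v j)" for j
  define Q where "Q l = coords_v (w l)" for l
  have P: "ring_cong p (v j) (lincomb (P j) w N)" for j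
    unfolding P_def by (rule coords_w)
  have Q: "ring_cong p (w l) (lincomb (Q l) v M)" for l
    unfolding Q_def by (rule coords_v)
  have PQ: "[(\<Sum>j<M. P j i * Q l j) = (if i = l then 1 else 0)] (mod p)" if "i < N" "l < N" for i l
  proof -
    have "lincomb (\<lambda>i. if i = l then 1 else 0) w N = w l"
      using \<open>l < N\<close> by (rule lincomb_delta)
    also have "ring_cong p \<dots> (lincomb (Q l) v M)"
      by (rule Q)
    also have "ring_cong p \<dots> (lincomb (\<lambda>i. \<Sum>j<M. P j i * Q l j) w N)"
      using P by (rule ring_cong_lincomb_lincomb)
    finally have "[(if i = l then 1 else 0) = (\<Sum>j<M. P j i * Q l j)] (mod p)"
      using independent_mod_coeffs_cong w \<open>i < N\<close> unfolding basis_mod_def by blast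
    then show ?thesis
      by (rule cong_sym)
  qed
  have QCP: "[A k j = (\<Sum>l<N. Q l k * (\<Sum>i<N. C l i * P j i))] (mod p)" if "k < M" "j < M" for k j
  proof -
    have "ring_cong p (lincomb (\<lambda>k. A k j) v M) (z * v j)"
      using A \<open>j < M\<close> unfolding is_matrix_mod_def by (blast intro: ring_cong_sym)
    also have "ring_cong p \<dots> (z * lincomb (P j) w N)"
      using P by (rule ring_cong_mult_left)
    also have "ring_cong p \<dots> (lincomb (\<lambda>l. \<Sum>i<N. C l i * P j i) w N)"
      using C by (rule is_matrix_mod_lincomb)
    also have "ring_cong p \<dots> (lincomb (\<lambda>k. \<Sum>l<N. Q l k * (\<Sum>i<N. C l i * P j i)) v M)"
      using Q by (rule ring_cong_lincomb_lincomb)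
    finally show ?thesis
      using independent_mod_coeffs_cong v \<open>k < M\<close> unfolding basis_mod_def by blast
  qed
  have "[(\<Sum>j<M. A j j) = (\<Sum>j<M. \<Sum>l<N. Q l j * (\<Sum>i<N. C l i * P j i))] (mod p)"
    using QCP by (intro cong_sum) auto
  also have "(\<Sum>j<M. \<Sum>l<N. Q l j * (\<Sum>i<N. C l i * P j i)) = (\<Sum>l<N. \<Sum>i<N. C l i * (\<Sum>j<M. P j i * Q l j))"
    by (simp add: sum_distrib_left mult_ac sum.swap[of _ "{..<M}"])
  also have "[\<dots> = (\<Sum>l<N. \<Sum>i<N. C l i * (if i = l then 1 else 0))] (mod p)"
    using PQ by (intro cong_sum cong_scalar_left) auto
  also have "(\<Sum>l<N. \<Sum>i<N. C l i * (if i = l then 1 else 0)) = (\<Sum>l<N. C l l)"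
    by (simp add: if_distrib sum.delta cong: if_cong)
  finally show ?thesis .
qed

lemma independent_mod_fun_upd:
  assumes "prime p" "independent_mod p w N" "\<not> in_span_mod p w N y"
  shows "independent_mod p (w(N := y)) (Suc N)"
  unfolding independent_mod_def
proof (rule allI, rule impI)
  fix c
  assume "ring_cong p (lincomb c (w(N := y)) (Suc N)) 0"
  then have rel: "ring_cong p (of_int (c N) * y) (- lincomb c w N)"
    by (simp add: lincomb_fun_upd_Suc ring_cong_def add.commute)
  have "p dvd c N"
  proof (rule ccontr)
    assume "\<not> p dvd c N"
    then have "coprime (c N) p"
      using assms(1) by (simp add: prime_imp_coprime coprime_commute)
    then obtain d where d: "[c N * d = 1] (mod p)"
      using cong_solve_coprime_int by blast
    have "y = of_int 1 * y"
      by simp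
    also have "ring_cong p \<dots> (of_int (c N * d) * y)"
      using d by (intro ring_cong_of_int_mult_cong) (rule cong_sym)
    also have "\<dots> = of_int d * (of_int (c N) * y)"
      by (simp add: mult_ac)
    also have "ring_cong p \<dots> (of_int d * - lincomb c w N)"
      using rel by (rule ring_cong_mult_left)
    also have "\<dots> = lincomb (\<lambda>i. - d * c i) w N"
      using of_int_mult_lincomb[of "- d" c w N] by simp
    finally show False
      using assms(3) unfolding in_span_mod_def by blast
  qed
  then have "ring_cong p (of_int (c N) * y) 0"
    using ring_cong_of_int_mult_cong[of "c N" 0 p y] by (simp add: cong_0_iff)
  then have "ring_cong p 0 (- lincomb c w N)"
    using rel by (meson ring_cong_sym ring_cong_trans)
  then have "ring_cong p (lincomb c w N) 0"
    by (simp add: ring_cong_def)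
  then have "\<forall>i<N. p dvd c i"
    using assms(2) unfolding independent_mod_def by blast
  with \<open>p dvd c N\<close> show "\<forall>i<Suc N. p dvd c i"
    using less_Suc_eq by auto
qed

locale mod_prime_basis =
  fixes p :: int and b :: "nat \<Rightarrow> 'b::comm_ring_1" and n :: nat
  assumes prime: "prime p" and basis: "basis_mod p b n"
begin

lemma independent_mod_le_dim:
  fixes w :: "nat \<Rightarrow> 'b"
  assumes "independent_mod p w N"
  shows "N \<le> n"
proof -
  txt \<open>Distinct digit vectors in \<open>[0,p)\<^sup>N\<close> give distinct classes modulo \<open>pB\<close>, and reducing
    their coordinates in \<open>b\<close> modulo \<open>p\<close> sends them injectively into \<open>[0,p)\<^sup>n\<close>.\<close>
  obtain coords where coords: "\<And>y. ring_cong p y (lincomb (coords y) b n)"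
    using basis_mod_coords[OF basis] by blast
  define digits where "digits K = PiE {..<K} (\<lambda>_. {0..<p})" for K :: nat
  define f where "f c = restrict (\<lambda>k. coords (lincomb c w N) k mod p) {..<n}" for c
  have "inj_on f (digits N)"
  proof (rule inj_onI)
    fix c c' assume c: "c \<in> digits N" and c': "c' \<in> digits N" and "f c = f c'"
    have "[coords (lincomb c w N) k = coords (lincomb c' w N) k] (mod p)" if "k < n" for k
      using fun_cong[OF \<open>f c = f c'\<close>, of k] that by (simp add: f_def cong_def)
    then have "ring_cong p (lincomb (coords (lincomb c w N)) b n) (lincomb (coords (lincomb c' w N)) b n)"
      by (rule ring_cong_lincomb_coeffs)
    then have "ring_cong p (lincomb c w N) (lincomb c' w N)"
      by (meson coords ring_cong_sym ring_cong_trans)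
    then have cong: "[c i = c' i] (mod p)" if "i < N" for i
      using independent_mod_coeffs_cong[OF assms _ that] by blast
    show "c = c'"
    proof (rule PiE_ext[OF c[unfolded digits_def] c'[unfolded digits_def]])
      fix i assume "i \<in> {..<N}"
      then show "c i = c' i"
        using cong[of i] c c' by (intro cong_less_imp_eq_int) (auto simp: digits_def PiE_iff)
    qed
  qed
  moreover have "f ` digits N \<subseteq> digits n"
    using prime_gt_0_int[OF prime] unfolding f_def digits_def by (intro image_subsetI) (simp add: PiE_iff)
  moreover have "finite (digits n)"
    by (simp add: digits_def finite_PiE)
  ultimately have "card (digits N) \<le> card (digits n)"
    by (rule card_inj_on_le)
  then have "nat p ^ N \<le> nat p ^ n"
    by (simp add: digits_def card_PiE)
  moreover have "1 < nat p"
    using prime_gt_1_int[OF prime] by simp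
  ultimately show ?thesis
    using power_le_imp_le_exp by blast
qed

lemma independent_mod_extend:
  fixes w :: "nat \<Rightarrow> 'b"
  assumes "independent_mod p w N"
  shows "\<exists>w' N'. N \<le> N' \<and> (\<forall>i<N. w' i = w i) \<and> (\<forall>i. N \<le> i \<and> i < N' \<longrightarrow> w' i \<in> S) \<and>
    independent_mod p w' N' \<and> (\<forall>y\<in>S. in_span_mod p w' N' y)"
  using assms
proof (induction "n - N" arbitrary: w N rule: less_induct)
  case less
  show ?case
  proof (cases "\<forall>y\<in>S. in_span_mod p w N y")
    case True
    then show ?thesis
      using less.prems by (intro exI[of _ w] exI[of _ N]) auto
  next
    case False
    then obtain y where y: "y \<in> S" "\<not> in_span_mod p w N y"
      by blast
    have ind: "independent_mod p (w(N := y)) (Suc N)"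
      using prime less.prems y(2) by (rule independent_mod_fun_upd)
    then have "n - Suc N < n - N"
      using independent_mod_le_dim[OF ind] by linarith
    then obtain w' N' where w': "Suc N \<le> N'" "\<forall>i<Suc N. w' i = (w(N := y)) i"
        "\<forall>i. Suc N \<le> i \<and> i < N' \<longrightarrow> w' i \<in> S"
        "independent_mod p w' N'" "\<forall>y\<in>S. in_span_mod p w' N' y"
      using less.hyps ind by blast
    have "w' i \<in> S" if "N \<le> i" "i < N'" for i
      using w'(2,3) y(1) that by (cases "i = N") auto
    then show ?thesis
      using w' by (intro exI[of _ w'] exI[of _ N']) auto
  qed
qed

lemma nilpotent_triangular_basis:
  fixes z :: 'b
  assumes "z ^ K = 0"
  shows "\<exists>w N. basis_mod p w N \<and> (\<forall>i<N. in_span_mod p w i (z * w i))"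
proof -
  txt \<open>Extend a basis of \<open>ker z\<^sup>t\<close> to one of \<open>ker z\<^sup>t\<^sup>+\<^sup>1\<close>: the new vectors are
    mapped by \<open>z\<close> into \<open>ker z\<^sup>t\<close>, which is spanned by the earlier ones.\<close>
  have "\<exists>w N. independent_mod p w N \<and> (\<forall>y. z ^ t * y = 0 \<longrightarrow> in_span_mod p w N y) \<and>
      (\<forall>i<N. in_span_mod p w i (z * w i))" for t
  proof (induction t)
    case 0
    show ?case
      by (intro exI[of _ "\<lambda>_. 0"] exI[of _ 0]) (simp add: in_span_mod_def)
  next
    case (Suc t)
    then obtain w N where w: "independent_mod p w N" "\<forall>y. z ^ t * y = 0 \<longrightarrow> in_span_mod p w N y"
        "\<forall>i<N. in_span_mod p w i (z * w i)"
      by blast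
    obtain w' N' where w': "N \<le> N'" "\<forall>i<N. w' i = w i" "\<forall>i. N \<le> i \<and> i < N' \<longrightarrow> z ^ Suc t * w' i = 0"
        "independent_mod p w' N'" "\<forall>y. z ^ Suc t * y = 0 \<longrightarrow> in_span_mod p w' N' y"
      using independent_mod_extend[OF w(1), where S = "{y. z ^ Suc t * y = 0}"] by auto
    have "in_span_mod p w' i (z * w' i)" if "i < N'" for i
    proof (cases "i < N")
      case True
      then show ?thesis
        using w(3) w'(2) by (auto intro: in_span_mod_mono)
    next
      case False
      then have "z ^ t * (z * w' i) = 0"
        using w'(3) that by (simp add: mult_ac)
      then have "in_span_mod p w N (z * w' i)"
        using w(2) by blast
      then show ?thesis
        using False w'(2) by (auto intro: in_span_mod_mono)
    qed
    then show ?case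
      using w'(4,5) by blast
  qed
  then obtain w N where "independent_mod p w N" "\<forall>y. z ^ K * y = 0 \<longrightarrow> in_span_mod p w N y"
      "\<forall>i<N. in_span_mod p w i (z * w i)"
    by blast
  then show ?thesis
    using assms unfolding basis_mod_def by auto
qed

lemma trace_mod_nilpotent:
  assumes "z ^ K = 0" "is_matrix_mod p z b n A"
  shows "[(\<Sum>j<n. A j j) = 0] (mod p)"
proof -
  obtain w N where w: "basis_mod p w N" and tri: "\<forall>i<N. in_span_mod p w i (z * w i)"
    using nilpotent_triangular_basis[OF assms(1)] by blast
  obtain c where c: "\<And>i. i < N \<Longrightarrow> ring_cong p (z * w i) (lincomb (c i) w i)"
    using tri unfolding in_span_mod_def by metis
  define C where "C l i = (if l < i then c i l else 0)" for l i
  have "is_matrix_mod p z w N C"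
    unfolding is_matrix_mod_def C_def using c by (simp add: lincomb_truncate)
  with basis w assms(2) have "[(\<Sum>j<n. A j j) = (\<Sum>i<N. C i i)] (mod p)"
    using trace_mod_basis_change by blast
  then show ?thesis
    by (simp add: C_def)
qed

lemma trace_mod_idempotent:
  assumes "e * e = e" "is_matrix_mod p e b n A" "[(\<Sum>j<n. A j j) = 0] (mod p)" "int n < p"
  shows "of_int p dvd e"
proof -
  txt \<open>A basis \<open>u\<close> of the image of \<open>e\<close>, extended by vectors of its kernel, is a basis in
    which \<open>e\<close> acts as \<open>diag(1,\<dots>,1,0,\<dots>,0)\<close>; so \<open>Tr(e)\<close> is the rank \<open>r \<le> n < p\<close>.\<close>
  obtain u r where u: "independent_mod p u r" "\<forall>i<r. e * u i = u i"
      "\<forall>y. e * y = y \<longrightarrow> in_span_mod p u r y"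
    using independent_mod_extend[OF independent_mod_0, where S = "{y. e * y = y}"] by auto
  obtain w N where w: "r \<le> N" "\<forall>i<r. w i = u i" "\<forall>i. r \<le> i \<and> i < N \<longrightarrow> e * w i = 0"
      "independent_mod p w N" "\<forall>y. e * y = 0 \<longrightarrow> in_span_mod p w N y"
    using independent_mod_extend[OF u(1), where S = "{y. e * y = 0}"] by auto
  have "in_span_mod p w N y" for y
  proof -
    have "e * (e * y) = e * y"
      using assms(1) by (simp add: mult.assoc[symmetric])
    then have "in_span_mod p u r (e * y)"
      using u(3) by blast
    then have "in_span_mod p w N (e * y)"
      by (rule in_span_mod_mono[OF _ w(1)]) (simp add: w(2))
    moreover have "in_span_mod p w N (y - e * y)"
      using w(5) assms(1) by (simp add: right_diff_distrib mult.assoc[symmetric])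
    ultimately have "in_span_mod p w N (e * y + (y - e * y))"
      by (rule in_span_mod_add)
    then show ?thesis
      by simp
  qed
  with w(4) have basis_w: "basis_mod p w N"
    unfolding basis_mod_def by blast
  define C where "C l i = (if l = i \<and> i < r then 1 else 0 :: int)" for l i
  have "is_matrix_mod p e w N C"
    unfolding is_matrix_mod_def
  proof (intro allI impI)
    fix i assume "i < N"
    show "ring_cong p (e * w i) (lincomb (\<lambda>l. C l i) w N)"
    proof (cases "i < r")
      case True
      then show ?thesis
        using u(2) w(2) lincomb_delta[OF \<open>i < N\<close>, of w] by (simp add: C_def)
    next
      case False
      then show ?thesis
        using w(3) \<open>i < N\<close> by (simp add: C_def)
    qed
  qed
  with basis basis_w assms(2) have "[(\<Sum>j<n. A j j) = (\<Sum>i<N. C i i)] (mod p)"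
    using trace_mod_basis_change by blast
  also have "(\<Sum>i<N. C i i) = (\<Sum>i<r. C i i)"
    using w(1) by (intro sum.mono_neutral_right) (auto simp: C_def)
  also have "\<dots> = int r"
    by (simp add: C_def)
  finally have "[int r = 0] (mod p)"
    using assms(3) by (blast intro: cong_trans cong_sym)
  then have "p dvd int r"
    by (simp add: cong_0_iff)
  moreover have "r \<le> n"
    using w(1) independent_mod_le_dim[OF w(4)] by simp
  ultimately have "r = 0"
    using assms(4) by (auto dest: zdvd_imp_le)
  then show ?thesis
    using u(3) assms(1) unfolding in_span_mod_def by simp
qed

end

section \<open>Free algebras over \<open>\<int>/m\<int>\<close>\<close>

lemma zmod_basis_iff:
  "is_zmod_basis m n b \<longleftrightarrow>
    (\<forall>y. \<exists>c. y = lincomb c b n) \<and> (\<forall>c. lincomb c b n = 0 \<longrightarrow> (\<forall>k<n. m dvd c k))"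
  by (simp add: is_zmod_basis_def lincomb_def)

lemma basis_mod_if_zmod_basis:
  assumes "is_zmod_basis m n b" "p dvd m"
  shows "basis_mod p b n"
proof -
  have span: "\<exists>c. y = lincomb c b n" for y
    using assms(1) by (simp add: zmod_basis_iff)
  have "independent_mod p b n"
    unfolding independent_mod_def
  proof (intro allI impI)
    fix c k assume "ring_cong p (lincomb c b n) 0" "k < n"
    then obtain y where y: "lincomb c b n = of_int p * y"
      by (auto simp: ring_cong_def elim: dvdE)
    obtain d where "y = lincomb d b n"
      using span by blast
    with y have "lincomb (\<lambda>i. c i - p * d i) b n = 0"
      by (simp add: of_int_mult_lincomb lincomb_diff[symmetric])
    then have "m dvd c k - p * d k"
      using assms(1) \<open>k < n\<close> unfolding zmod_basis_iff by blast
    then have "p dvd c k - p * d k"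
      using assms(2) by (rule dvd_trans[rotated])
    then show "p dvd c k"
      using dvd_add[OF _ dvd_triv_left[of p "d k"]] by fastforce
  qed
  moreover have "in_span_mod p b n y" for y
  proof -
    obtain c where "y = lincomb c b n"
      using span by blast
    then show ?thesis
      unfolding in_span_mod_def by (intro exI[of _ c]) simp
  qed
  ultimately show ?thesis
    unfolding basis_mod_def by blast
qed

lemma zmod_trace_eq_matrix_trace:
  assumes "is_zmod_basis m n b"
  obtains A where "\<And>p. is_matrix_mod p z b n A" "zmod_trace n b z = (\<Sum>j<n. A j j)"
proof
  define A where "A k j = (SOME c. z * b j = lincomb c b n) k" for k j
  have "z * b j = lincomb (\<lambda>k. A k j) b n" for j
  proof -
    have "\<exists>c. z * b j = lincomb c b n"
      using assms by (simp add: zmod_basis_iff)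
    then show ?thesis
      unfolding A_def by (rule someI_ex)
  qed
  then show "is_matrix_mod p z b n A" for p
    by (simp add: is_matrix_mod_def)
  show "zmod_trace n b z = (\<Sum>j<n. A j j)"
    by (simp add: zmod_trace_def A_def lincomb_def)
qed

lemma zmod_trace_nilpotent:
  assumes "is_zmod_basis m n b" "prime p" "p dvd m" "z ^ K = 0"
  shows "p dvd zmod_trace n b z"
proof -
  interpret mod_prime_basis p b n
    using assms(2) basis_mod_if_zmod_basis[OF assms(1,3)] by unfold_locales
  obtain A where "is_matrix_mod p z b n A" "zmod_trace n b z = (\<Sum>j<n. A j j)"
    using zmod_trace_eq_matrix_trace[OF assms(1)] by blast
  with trace_mod_nilpotent[OF assms(4)] show ?thesis
    by (simp add: cong_0_iff)
qed

lemma zmod_trace_idempotent: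
  assumes "is_zmod_basis m n b" "prime p" "p dvd m" "int n < p"
    and "e * e = e" "p dvd zmod_trace n b e"
  shows "of_int p dvd e"
proof -
  interpret mod_prime_basis p b n
    using assms(2) basis_mod_if_zmod_basis[OF assms(1,3)] by unfold_locales
  obtain A where "is_matrix_mod p e b n A" "zmod_trace n b e = (\<Sum>j<n. A j j)"
    using zmod_trace_eq_matrix_trace[OF assms(1)] by blast
  with assms(4-6) show ?thesis
    by (intro trace_mod_idempotent[where A = A]) (simp_all add: cong_0_iff)
qed

lemma zmod_basis_eq_0_if_prime_multiple:
  fixes b :: "nat \<Rightarrow> 'b::comm_ring_1" and y :: 'b
  assumes "squarefree m" "(of_int m :: 'b) = 0" "is_zmod_basis m n b"
    and "\<And>p. prime p \<Longrightarrow> p dvd m \<Longrightarrow> of_int p dvd y"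
  shows "y = 0"
proof -
  obtain c where y: "y = lincomb c b n"
    using assms(3) unfolding zmod_basis_iff by blast
  have m_dvd: "m dvd c k" if "k < n" for k
  proof (rule squarefree_dvd_if_prime_divisors_dvd[OF assms(1)])
    fix p :: int assume "prime p" "p dvd m"
    then have "independent_mod p b n" "ring_cong p (lincomb c b n) 0"
      using basis_mod_if_zmod_basis[OF assms(3)] assms(4) y by (simp_all add: basis_mod_def)
    then show "p dvd c k"
      using \<open>k < n\<close> unfolding independent_mod_def by blast
  qed
  have "of_int (c k) = (0 :: 'b)" if k: "k < n" for k
  proof -
    obtain q where "c k = m * q"
      using m_dvd[OF k] by (rule dvdE)
    then show ?thesis
      using assms(2) by simp
  qed
  then show ?thesis
    unfolding y lincomb_def by simp
qed

lemma finite_UNIV_if_zmod_basis: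
  fixes b :: "nat \<Rightarrow> 'b::comm_ring_1"
  assumes "m \<noteq> 0" "(of_int m :: 'b) = 0" "is_zmod_basis m n b"
  shows "finite (UNIV :: 'b set)"
proof -
  have bound: "-\<bar>m\<bar> \<le> c mod m \<and> c mod m \<le> \<bar>m\<bar>" for c
    using abs_mod_less[OF assms(1), of c] by (simp add: abs_less_iff)
  have "UNIV \<subseteq> (\<lambda>c. lincomb c b n) ` PiE {..<n} (\<lambda>_. {-\<bar>m\<bar>..\<bar>m\<bar>})"
  proof
    fix y :: 'b
    obtain c where y: "y = lincomb c b n"
      using assms(3) unfolding zmod_basis_iff by blast
    have "y = lincomb (restrict (\<lambda>k. c k mod m) {..<n}) b n"
      unfolding y lincomb_def
    proof (rule sum.cong[OF refl])
      fix k assume "k \<in> {..<n}"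
      have "c k = m * (c k div m) + c k mod m"
        by simp
      then have "(of_int (c k) :: 'b) = of_int m * of_int (c k div m) + of_int (c k mod m)"
        by (metis of_int_add of_int_mult)
      then have "(of_int (c k) :: 'b) = of_int (c k mod m)"
        using assms(2) by simp
      then show "of_int (c k) * b k = of_int (restrict (\<lambda>k. c k mod m) {..<n} k) * b k"
        using \<open>k \<in> {..<n}\<close> by simp
    qed
    moreover have "restrict (\<lambda>k. c k mod m) {..<n} \<in> PiE {..<n} (\<lambda>_. {-\<bar>m\<bar>..\<bar>m\<bar>})"
      using bound by (simp add: PiE_iff)
    ultimately show "y \<in> (\<lambda>c. lincomb c b n) ` PiE {..<n} (\<lambda>_. {-\<bar>m\<bar>..\<bar>m\<bar>})"
      by blast
  qed
  then show ?thesis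
    by (rule finite_subset) (simp add: finite_PiE)
qed

lemma nilpotent_in_trace_radical:
  assumes "squarefree m" "is_zmod_basis m n b" "x ^ K = 0"
  shows "x \<in> trace_radical m n b"
proof -
  have "m dvd zmod_trace n b (x * y)" for y
  proof (rule squarefree_dvd_if_prime_divisors_dvd[OF assms(1)])
    fix p :: int assume "prime p" "p dvd m"
    moreover have "(x * y) ^ K = 0"
      using assms(3) by (simp add: power_mult_distrib)
    ultimately show "p dvd zmod_trace n b (x * y)"
      by (rule zmod_trace_nilpotent[OF assms(2)])
  qed
  then show ?thesis
    unfolding trace_radical_def by blast
qed

lemma trace_radical_nilpotent:
  fixes b :: "nat \<Rightarrow> 'b::comm_ring_1"
  assumes "squarefree m" "(of_int m :: 'b) = 0" "is_zmod_basis m n b"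
    and "\<And>p. prime p \<Longrightarrow> p dvd m \<Longrightarrow> int n < p"
    and "x \<in> trace_radical m n b"
  obtains K where "x ^ K = 0"
proof -
  have "finite (UNIV :: 'b set)"
    using assms(1-3) by (intro finite_UNIV_if_zmod_basis) auto
  then obtain K where K: "K \<ge> 1" "x ^ K * x ^ K = x ^ K"
    by (rule finite_idempotent_power)
  have "x ^ K = x * x ^ (K - 1)"
    using K(1) by (cases K) auto
  then have trace: "m dvd zmod_trace n b (x ^ K)"
    using assms(5) unfolding trace_radical_def by simp
  have "of_int p dvd x ^ K" if "prime p" "p dvd m" for p
  proof (rule zmod_trace_idempotent[OF assms(3) that assms(4)[OF that] K(2)])
    show "p dvd zmod_trace n b (x ^ K)"
      using \<open>p dvd m\<close> trace by (rule dvd_trans)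
  qed
  then have "x ^ K = 0"
    by (rule zmod_basis_eq_0_if_prime_multiple[OF assms(1-3)])
  then show ?thesis
    by (rule that)
qed

theorem proposition5p20:
  fixes m :: int and n :: nat and b :: "nat \<Rightarrow> 'b::comm_ring_1"
  assumes "squarefree m"
    and "(of_int m :: 'b) = 0"
    and "is_zmod_basis m n b"
    and "\<forall>p::int. prime p \<and> p dvd m \<longrightarrow> p > int n"
  shows "trace_radical m n b = (nilradical :: 'b set)"
proof (intro set_eqI iffI)
  fix x :: 'b
  assume "x \<in> trace_radical m n b"
  with assms obtain K where "x ^ K = 0"
    by (elim trace_radical_nilpotent) auto
  then show "x \<in> nilradical"
    unfolding nilradical_def by blast
next
  fix x :: 'b
  assume "x \<in> nilradical"
  then obtain K where "x ^ K = 0"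
    unfolding nilradical_def by blast
  with assms(1,3) show "x \<in> trace_radical m n b"
    by (rule nilpotent_in_trace_radical)
qed

end
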